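(* Let $\mathbf S_1,\mathbf S_2\in\mathrm{Sym}(m;2)$ and $\mathbf G_j=\mathbf G_U(\mathbf S_j)\mathbf H_N$ for $j=1,2$, and put $\mathbf G=\mathbf G_1^\dagger\mathbf G_2$ and $r=\mathrm{rank}(\mathbf S_1+\mathbf S_2)$. Then every column of $\mathbf G$ has exactly $2^r$ nonzero entries, each of modulus $2^{-r/2}$, and for each column the set of row indices $\mathbf b_1\in\mathbb F_2^m$ of its nonzero entries is a coset of the subspace $H=\mathrm{rs}(\mathbf S_1+\mathbf S_2)$ (row space over $\mathbb F_2$) in $\mathbb F_2^m$.
   Context: Fix $m\ge1$, $N=2^m$. $\mathrm{Sym}(m;2)$ is the set of symmetric binary $m\times m$ matrices; addition and rank are over $\mathbb F_2$. The standard basis of $\mathbb C^N=(\mathbb C^2)^{\otimes m}$ is $\{\mathbf e_{\mathbf v}=\mathbf e_{v_1}\otimes\cdots\otimes\mathbf e_{v_m}:\mathbf v\in\mathbb F_2^m\}$ and matrices on $\mathbb C^N$ are indexed by $\mathbb F_2^m\times\mathbb F_2^m$; $\dagger$ is conjugate transpose. $\mathbf G_U(\mathbf S)=\mathrm{diag}(i^{\mathbf v^T\mathbf S\mathbf v})_{\mathbf v\in\mathbb F_2^m}$, where $\mathbf v^T\mathbf S\mathbf v$ is computed in $\mathbb Z$ after lifting binary entries to $0,1$. $\mathbf H_N=\mathbf H_2^{\otimes m}=2^{-m/2}[(-1)^{\mathbf v^T\mathbf w}]_{\mathbf v,\mathbf w\in\mathbb F_2^m}$ with $\mathbf H_2=\frac1{\sqrt2}\begin{pmatrix}1&1\\1&-1\end{pmatrix}$.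 (The columns of $\mathbf G_U(\mathbf S)\mathbf H_N$ are the binary chirps with symmetric matrix $\mathbf S$.) *)

theory Defs
  imports "HOL-Analysis.Analysis" "HOL-Library.Z2"
begin

text \<open>F_2 is the field type bit; F_2^m is bit^'n with CARD('n) = m.\<close>

instance bit :: finite
proof
  have "(UNIV :: bit set) = {0, 1}" by (auto intro: bit.exhaust)
  then show "finite (UNIV :: bit set)" by (metis finite.emptyI finite.insertI)
qed

definition lift :: "bit \<Rightarrow> nat" where "lift b = of_bit b"

text \<open>v^T S v computed in Z (here in nat, all terms nonnegative) after lifting.\<close>
definition qform :: "bit^'n^'n \<Rightarrow> bit^'n \<Rightarrow> nat" where
  "qform S v = (\<Sum>i\<in>UNIV. \<Sum>j\<in>UNIV. lift (v$i) * lift (S$i$j) * lift (v$j))"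

definition GU :: "bit^'n^'n \<Rightarrow> complex^(bit^'n)^(bit^'n)" where
  "GU S = (\<chi> v w. if v = w then \<i> ^ qform S v else 0)"

definition HN :: "complex^(bit^'n)^(bit^'n)" where
  "HN = (\<chi> v w. complex_of_real (2 powr (- real CARD('n) / 2)) *
                 (-1) ^ (\<Sum>i\<in>UNIV. lift (v$i) * lift (w$i)))"

definition dagger :: "complex^'m^'k \<Rightarrow> complex^'k^'m" where
  "dagger A = (\<chi> i j. cnj (A$j$i))"

end

theory Submission
  imports Defs
begin

(* The entry (b1, b2) of G is 2^-m T(b1 + b2), where T(c) = sum_v chi(v) (-1)^(v.c) is the
   correlation of the phase chi(v) = conj(i^(v^T S1 v)) i^(v^T S2 v). For symmetric S,
   i^((v+u)^T S (v+u)) = i^(v^T S v) i^(u^T S u) (-1)^(v^T S u), so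
   chi(v + u) = chi(v) chi(u) (-1)^(v^T (S1 + S2) u). Consequently
   |T(c)|^2 = 2^m sum_{u in K} (-1)^(u.c) conj(chi(u)) with K = ker(S1 + S2), and chi is a
   character on K. Some T(c0) is nonzero because the T(c) sum to 2^m, and translation
   invariance of T under K then forces chi(u) = (-1)^(u.c0) on K. Hence |T(c)|^2 is 2^m |K| when
   c + c0 lies in the annihilator of K, which is the row space of S1 + S2, and 0 otherwise;
   |K| = 2^(m - r) yields the modulus 2^(-r/2). *)

definition bit_sign :: "bit \<Rightarrow> complex" where
  "bit_sign b = (if b = 0 then 1 else -1)"

lemma bit_sign_simps [simp]:
  "bit_sign 0 = 1" "bit_sign 1 = -1" "cnj (bit_sign b) = bit_sign b" "norm (bit_sign b) = 1"
  by (simp_all add: bit_sign_def)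

lemma bit_sign_add: "bit_sign (a + b) = bit_sign a * bit_sign b"
  by (cases a; cases b) (simp_all add: bit_sign_def)

lemma bit_sign_mult_self: "bit_sign a * bit_sign a = 1"
  by (cases a) simp_all

lemma minus_one_power_eq_bit_sign: "(-1 :: complex) ^ n = bit_sign (of_nat n)"
  by (induction n) (simp_all add: bit_sign_add)

lemma lift_simps [simp]: "lift 0 = 0" "lift 1 = 1"
  by (simp_all add: lift_def)

lemma of_nat_lift [simp]: "(of_nat (lift b) :: bit) = b"
  by (cases b) simp_all

lemma card_bit [simp]: "CARD(bit) = 2"
proof -
  have "(UNIV :: bit set) = {0, 1}"
    by (auto intro: bit.exhaust)
  then have "CARD(bit) = card {0 :: bit, 1}"
    by (rule arg_cong)
  then show ?thesis
    by simp
qed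

lemma add_self_bit_vec [simp]: "(x :: bit^'n) + x = 0"
  by (simp add: vec_eq_iff)

lemma add_eq_iff_bit_vec: "(x :: bit^'n) + y = z \<longleftrightarrow> x = y + z"
proof
  assume "x + y = z"
  then have "x + y + y = y + z"
    by (simp add: add.commute)
  then show "x = y + z"
    by (simp add: add.assoc)
next
  assume "x = y + z"
  then have "x + y = z + (y + y)"
    by (simp only: add_ac)
  then show "x + y = z"
    by (simp only: add_self_bit_vec add_0_right)
qed

definition dot :: "bit^'n \<Rightarrow> bit^'n \<Rightarrow> bit" where
  "dot v w = (\<Sum>i\<in>UNIV. v$i * w$i)"

lemma dot_commute: "dot v w = dot w v"
  unfolding dot_def by (simp only: mult.commute)

lemma dot_add_left: "dot (u + v) w = dot u w + dot v w"
  unfolding dot_def by (simp only: vector_add_component distrib_right sum.distrib)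

lemma dot_add_right: "dot w (u + v) = dot w u + dot w v"
  by (simp only: dot_commute[of w] dot_add_left)

lemma dot_zero [simp]: "dot 0 w = 0" "dot w 0 = 0"
  by (simp_all add: dot_def)

lemma dot_scale_left: "dot (c *s v) w = c * dot v w"
  by (simp add: dot_def sum_distrib_left mult.assoc del: mult_bit_eq_and)

lemma dot_axis_left: "dot (axis i 1) w = w $ i"
  by (simp add: dot_def axis_def if_distrib[of "\<lambda>x. x * _"] del: mult_bit_eq_and cong: if_cong)

lemma matrix_vector_mult_component_dot: "(S *v u) $ i = dot (row i S) u"
  by (simp add: matrix_vector_mult_def dot_def row_def del: mult_bit_eq_and)

definition perp :: "(bit^'n) set \<Rightarrow> (bit^'n) set" where
  "perp W = {y. \<forall>u\<in>W. dot u y = 0}"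

lemma sum_bit_sign_dot_subgroup:
  fixes W :: "(bit^'n) set"
  assumes add: "\<And>u v. u \<in> W \<Longrightarrow> v \<in> W \<Longrightarrow> u + v \<in> W"
  shows "(\<Sum>u\<in>W. bit_sign (dot u y)) = (if y \<in> perp W then of_nat (card W) else 0)"
proof (cases "y \<in> perp W")
  case False
  then obtain u0 where u0: "u0 \<in> W" "dot u0 y = 1"
    by (auto simp: perp_def)
  have "bij_betw (\<lambda>u. u + u0) W W"
    by (rule bij_betwI[where g = "\<lambda>u. u + u0"]) (auto simp: add u0 add.assoc)
  then have "(\<Sum>u\<in>W. bit_sign (dot u y)) = (\<Sum>u\<in>W. bit_sign (dot (u + u0) y))"
    using sum.reindex_bij_betw[of "\<lambda>u. u + u0" W W "\<lambda>u. bit_sign (dot u y)"] by simp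
  also have "\<dots> = - (\<Sum>u\<in>W. bit_sign (dot u y))"
    by (simp only: dot_add_left u0(2) bit_sign_add bit_sign_simps mult_minus1_right sum_negf)
  finally show ?thesis
    using False by simp
qed (simp add: perp_def)

lemma perp_UNIV: "perp (UNIV :: (bit^'n) set) = {0}"
  by (auto simp: perp_def vec_eq_iff dot_axis_left[symmetric])

lemma sum_bit_sign_dot_UNIV:
  fixes y :: "bit^'n"
  shows "(\<Sum>u\<in>UNIV. bit_sign (dot u y)) = (if y = 0 then 2 ^ CARD('n) else 0)"
  using sum_bit_sign_dot_subgroup[of "UNIV :: (bit^'n) set" y] by (simp add: perp_UNIV)

lemma card_mult_card_perp:
  fixes W :: "(bit^'n) set"
  assumes zero: "0 \<in> W" and add: "\<And>u v. u \<in> W \<Longrightarrow> v \<in> W \<Longrightarrow> u + v \<in> W"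
  shows "card W * card (perp W) = 2 ^ CARD('n)"
proof -
  have "(of_nat (card W * card (perp W)) :: complex) = (\<Sum>y\<in>UNIV. \<Sum>u\<in>W. bit_sign (dot u y))"
    by (simp add: sum_bit_sign_dot_subgroup[OF add] sum.If_cases)
  also have "\<dots> = (\<Sum>u\<in>W. \<Sum>y\<in>UNIV. bit_sign (dot y u))"
    by (subst sum.swap) (simp add: dot_commute)
  also have "\<dots> = of_nat (2 ^ CARD('n))"
    using zero by (simp add: sum_bit_sign_dot_UNIV sum.delta)
  finally show ?thesis
    by (simp only: of_nat_eq_iff)
qed

lemma card_span_independent:
  fixes B :: "('a::{field,finite}^'n) set"
  assumes "vec.independent B"
  shows "card (vec.span B) = CARD('a) ^ card B"
proof -
  have fin: "finite B"
    by simp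
  let ?comb = "\<lambda>c. \<Sum>v\<in>B. c v *s v"
  have span: "vec.span B = ?comb ` (B \<rightarrow>\<^sub>E UNIV)"
  proof -
    have "?comb c = ?comb (restrict c B)" for c
      by (intro sum.cong) auto
    moreover have "restrict c B \<in> B \<rightarrow>\<^sub>E UNIV" for c :: "'a^'n \<Rightarrow> 'a"
      by simp
    ultimately show ?thesis
      unfolding vec.span_finite[OF fin] by blast
  qed
  have "inj_on ?comb (B \<rightarrow>\<^sub>E UNIV)"
  proof (rule inj_onI)
    fix c d assume c: "c \<in> B \<rightarrow>\<^sub>E UNIV" and d: "d \<in> B \<rightarrow>\<^sub>E UNIV" and eq: "?comb c = ?comb d"
    have "(\<Sum>v\<in>B. (c v - d v) *s v) = 0"
      using eq by (simp add: vector_sub_rdistrib sum_subtractf)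
    then have "\<forall>v\<in>B. c v - d v = 0"
      using vec.independentD[OF assms fin subset_refl, of "\<lambda>v. c v - d v"] by blast
    then show "c = d"
      using c d by (auto simp: PiE_def extensional_def fun_eq_iff)
  qed
  then show ?thesis
    by (simp add: span card_image card_PiE)
qed

lemma card_span:
  fixes X :: "('a::{field,finite}^'n) set"
  shows "card (vec.span X) = CARD('a) ^ vec.dim X"
proof -
  obtain B where B: "B \<subseteq> X" "vec.independent B" "X \<subseteq> vec.span B" "card B = vec.dim X"
    using vec.basis_exists by blast
  then have "vec.span B = vec.span X"
    using B(1,3) vec.span_superset[of X] by (simp add: vec.span_eq subset_trans)
  then show ?thesis
    using card_span_independent[OF B(2)] B(4) by simp
qed

lemma kernel_eq_perp_row_space:
  fixes S :: "bit^'n^'n"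
  shows "{u. S *v u = 0} = perp (vec.span (rows S))"
proof (intro set_eqI iffI)
  fix u assume "u \<in> {u. S *v u = 0}"
  then have "\<forall>i. dot (row i S) u = 0"
    by (simp add: matrix_vector_mult_component_dot[symmetric])
  then have "rows S \<subseteq> {y. dot y u = 0}"
    by (auto simp: rows_def)
  moreover have "vec.subspace {y. dot y u = 0}"
    by (simp add: vec.subspace_def dot_add_left dot_scale_left)
  ultimately have "vec.span (rows S) \<subseteq> {y. dot y u = 0}"
    by (rule vec.span_minimal)
  then show "u \<in> perp (vec.span (rows S))"
    by (auto simp: perp_def)
next
  fix u assume "u \<in> perp (vec.span (rows S))"
  then show "u \<in> {u. S *v u = 0}"
    by (auto simp: perp_def rows_def vec_eq_iff matrix_vector_mult_component_dot intro: vec.span_base)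
qed

lemma zero_in_perp: "0 \<in> perp W"
  by (simp add: perp_def)

lemma add_in_perp: "u \<in> perp W \<Longrightarrow> v \<in> perp W \<Longrightarrow> u + v \<in> perp W"
  by (simp add: perp_def dot_add_right)

lemma card_kernel_nonzero: "card {u. (S :: bit^'n^'n) *v u = 0} \<noteq> 0"
proof -
  have "0 \<in> {u. S *v u = 0}"
    by simp
  then show ?thesis
    using card_gt_0_iff[of "{u. S *v u = 0}"] by fastforce
qed

lemma card_kernel_mult_card_row_space:
  fixes S :: "bit^'n^'n"
  shows "card {u. S *v u = 0} * card (vec.span (rows S)) = 2 ^ CARD('n)"
  unfolding kernel_eq_perp_row_space
  by (subst mult.commute, rule card_mult_card_perp) (auto intro: vec.span_zero vec.span_add)

lemma perp_kernel_eq_row_space: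
  fixes S :: "bit^'n^'n"
  shows "perp {u. S *v u = 0} = vec.span (rows S)"
proof -
  let ?H = "vec.span (rows S)" and ?K = "{u. S *v u = 0}"
  have "card ?K * card (perp ?K) = 2 ^ CARD('n)"
    unfolding kernel_eq_perp_row_space by (rule card_mult_card_perp) (auto intro: zero_in_perp add_in_perp)
  moreover have "card ?K * card ?H = 2 ^ CARD('n)"
    by (rule card_kernel_mult_card_row_space)
  ultimately have "card ?K * card (perp ?K) = card ?K * card ?H"
    by simp
  then have "card (perp ?K) = card ?H"
    using card_kernel_nonzero[of S] by simp
  moreover have "?H \<subseteq> perp ?K"
    by (auto simp: kernel_eq_perp_row_space perp_def dot_commute)
  ultimately show ?thesis
    using card_subset_eq[OF finite, of ?H "perp ?K"] by simp
qed

lemma card_row_space: "card (vec.span (rows (S :: bit^'n^'n))) = 2 ^ rank S"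
  by (simp add: row_rank_def_gen card_span)

(* With lift (a + b) = lift a + lift b - 2 lift a lift b this says that, modulo 4, the integer
   quadratic form of a sum of bit vectors is the sum of the forms plus twice the bilinear form. *)
lemma quadratic_form_xor_expansion:
  fixes x y :: "'i \<Rightarrow> 'a::comm_ring_1" and s :: "'i \<Rightarrow> 'i \<Rightarrow> 'a"
  assumes sym: "\<And>i j. s i j = s j i"
  defines "Q z \<equiv> \<Sum>i\<in>UNIV. \<Sum>j\<in>UNIV. z i * s i j * z j"
  shows "\<exists>k. Q (\<lambda>i. x i + y i - 2 * x i * y i)
             = Q x + Q y + 2 * (\<Sum>i\<in>UNIV. \<Sum>j\<in>UNIV. x i * s i j * y j) + 4 * k"
proof -
  define d where "d i = x i * y i" for i
  have xor: "(\<lambda>i. x i + y i - 2 * x i * y i) = (\<lambda>i. x i + y i - 2 * d i)"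
    by (simp add: d_def mult.assoc)
  have swap: "(\<Sum>i\<in>UNIV. \<Sum>j\<in>UNIV. f i * s i j * g j) = (\<Sum>i\<in>UNIV. \<Sum>j\<in>UNIV. g i * s i j * f j)"
    for f g :: "'i \<Rightarrow> 'a"
    by (subst sum.swap) (simp add: sym mult.commute mult.left_commute)
  have product: "(x i + y i - 2 * d i) * s i j * (x j + y j - 2 * d j) =
      x i * s i j * x j + y i * s i j * y j + x i * s i j * y j + y i * s i j * x j
      - 2 * (d i * s i j * (x j + y j)) - 2 * ((x i + y i) * s i j * d j)
      + 4 * (d i * s i j * d j)" for i j
    by (simp add: algebra_simps)
  have "Q (\<lambda>i. x i + y i - 2 * x i * y i)
      = Q x + Q y + (\<Sum>i\<in>UNIV. \<Sum>j\<in>UNIV. x i * s i j * y j) + (\<Sum>i\<in>UNIV. \<Sum>j\<in>UNIV. y i * s i j * x j)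
        - 2 * (\<Sum>i\<in>UNIV. \<Sum>j\<in>UNIV. d i * s i j * (x j + y j))
        - 2 * (\<Sum>i\<in>UNIV. \<Sum>j\<in>UNIV. (x i + y i) * s i j * d j)
        + 4 * (\<Sum>i\<in>UNIV. \<Sum>j\<in>UNIV. d i * s i j * d j)"
    unfolding xor Q_def product by (simp only: sum.distrib sum_subtractf sum_distrib_left)
  also have "\<dots> = Q x + Q y + 2 * (\<Sum>i\<in>UNIV. \<Sum>j\<in>UNIV. x i * s i j * y j)
        + 4 * ((\<Sum>i\<in>UNIV. \<Sum>j\<in>UNIV. d i * s i j * d j) - (\<Sum>i\<in>UNIV. \<Sum>j\<in>UNIV. d i * s i j * (x j + y j)))"
    by (simp only: swap[of y x] swap[of "\<lambda>i. x i + y i" d]) (simp add: algebra_simps)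
  finally show ?thesis
    by blast
qed

lemma power_i_mod_4: "\<i> ^ n = \<i> ^ (n mod 4)"
proof -
  have "\<i> ^ n = \<i> ^ (4 * (n div 4) + n mod 4)"
    by simp
  also have "\<dots> = (\<i> ^ 4) ^ (n div 4) * \<i> ^ (n mod 4)"
    by (simp only: power_add power_mult)
  finally have "\<i> ^ n = (\<i> ^ 4) ^ (n div 4) * \<i> ^ (n mod 4)" .
  then show ?thesis
    by (simp add: power4_eq_xxxx)
qed

lemma power_i_eq_if_cong_4:
  assumes "int a = int b + 4 * k"
  shows "\<i> ^ a = \<i> ^ b"
proof -
  have "int (a mod 4) = int (b mod 4)"
    using assms by (simp add: zmod_int)
  then have "a mod 4 = b mod 4"
    by (simp only: of_nat_eq_iff)
  then show ?thesis
    by (subst (1 2) power_i_mod_4) simp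
qed

lemma lift_add: "int (lift (a + b)) = int (lift a) + int (lift b) - 2 * int (lift a) * int (lift b)"
  by (cases a; cases b) simp_all

lemma of_nat_bilinear_form:
  fixes S :: "bit^'n^'n"
  shows "(of_nat (\<Sum>i\<in>UNIV. \<Sum>j\<in>UNIV. lift (v$i) * lift (S$i$j) * lift (w$j)) :: bit) = dot v (S *v w)"
  by (simp add: of_nat_sum dot_def matrix_vector_mult_def sum_distrib_left mult.assoc
      del: mult_bit_eq_and add_bit_eq_xor)

lemma power_i_qform_add:
  fixes S :: "bit^'n^'n"
  assumes sym: "transpose S = S"
  shows "\<i> ^ qform S (v + w) = \<i> ^ qform S v * \<i> ^ qform S w * bit_sign (dot v (S *v w))"
proof -
  define b where "b = (\<Sum>i\<in>UNIV. \<Sum>j\<in>UNIV. lift (v$i) * lift (S$i$j) * lift (w$j))"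
  have "\<exists>k. int (qform S (v + w)) = int (qform S v) + int (qform S w) + 2 * int b + 4 * k"
  proof -
    have "S$i$j = S$j$i" for i j
      using sym by (simp add: vec_eq_iff transpose_def)
    then have "int (lift (S$i$j)) = int (lift (S$j$i))" for i j
      by simp
    from quadratic_form_xor_expansion[of "\<lambda>i j. int (lift (S$i$j))", OF this,
        of "\<lambda>i. int (lift (v$i))" "\<lambda>i. int (lift (w$i))"]
    show ?thesis
      by (simp add: qform_def b_def lift_add of_nat_sum del: add_bit_eq_xor)
  qed
  then obtain k where "int (qform S (v + w)) = int (qform S v + qform S w + 2 * b) + 4 * k"
    by auto
  then have "\<i> ^ qform S (v + w) = \<i> ^ (qform S v + qform S w + 2 * b)"
    by (rule power_i_eq_if_cong_4)
  also have "\<dots> = \<i> ^ qform S v * \<i> ^ qform S w * (-1) ^ b"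
    by (simp add: power_add power_mult)
  finally show ?thesis
    by (simp only: minus_one_power_eq_bit_sign b_def of_nat_bilinear_form)
qed

definition chirp_phase :: "bit^'n^'n \<Rightarrow> bit^'n^'n \<Rightarrow> bit^'n \<Rightarrow> complex" where
  "chirp_phase S1 S2 v = cnj (\<i> ^ qform S1 v) * \<i> ^ qform S2 v"

lemma chirp_phase_zero [simp]: "chirp_phase S1 S2 0 = 1"
  by (simp add: chirp_phase_def qform_def)

lemma chirp_phase_mult_cnj [simp]: "chirp_phase S1 S2 v * cnj (chirp_phase S1 S2 v) = 1"
proof -
  have "norm (chirp_phase S1 S2 v) = 1"
    by (simp add: chirp_phase_def norm_mult norm_power)
  then show ?thesis
    by (simp add: complex_norm_square[symmetric])
qed

lemma chirp_phase_add:
  assumes "transpose S1 = S1" "transpose S2 = S2"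
  shows "chirp_phase S1 S2 (v + u)
           = chirp_phase S1 S2 v * chirp_phase S1 S2 u * bit_sign (dot v ((S1 + S2) *v u))"
  by (simp add: chirp_phase_def power_i_qform_add[OF assms(1)] power_i_qform_add[OF assms(2)]
      matrix_vector_mult_add_rdistrib dot_add_right bit_sign_add del: add_bit_eq_xor)

definition chirp_correlation :: "bit^'n^'n \<Rightarrow> bit^'n^'n \<Rightarrow> bit^'n \<Rightarrow> complex" where
  "chirp_correlation S1 S2 c = (\<Sum>v\<in>UNIV. chirp_phase S1 S2 v * bit_sign (dot v c))"

lemma HN_entry: "(HN :: complex^(bit^'n)^(bit^'n))$v$w
    = complex_of_real (2 powr (- real CARD('n) / 2)) * bit_sign (dot v w)"
  by (simp add: HN_def minus_one_power_eq_bit_sign dot_def)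

lemma GU_HN_entry: "(GU S ** HN :: complex^(bit^'n)^(bit^'n))$v$w = \<i> ^ qform S v * HN$v$w"
  by (simp add: matrix_matrix_mult_def GU_def if_distrib[of "\<lambda>x. x * _"] sum.delta cong: if_cong)

lemma matrix_matrix_mult_entry: "(A ** B)$i$j = (\<Sum>k\<in>UNIV. A$i$k * B$k$j)"
  by (simp add: matrix_matrix_mult_def)

lemma chirp_gram_entry:
  fixes S1 S2 :: "bit^'n^'n"
  shows "(dagger (GU S1 ** HN) ** (GU S2 ** HN) :: complex^(bit^'n)^(bit^'n))$b1$b2
           = complex_of_real (2 powr (- real CARD('n))) * chirp_correlation S1 S2 (b1 + b2)"
proof -
  define a where "a = complex_of_real (2 powr (- real CARD('n) / 2))"
  have "a * a = complex_of_real (2 powr (- real CARD('n)))"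
    unfolding a_def of_real_mult[symmetric] powr_add[symmetric] by simp
  moreover have "(dagger (GU S1 ** HN) ** (GU S2 ** HN) :: complex^(bit^'n)^(bit^'n))$b1$b2
      = (\<Sum>v\<in>UNIV. cnj (\<i> ^ qform S1 v * (a * bit_sign (dot v b1))) * (\<i> ^ qform S2 v * (a * bit_sign (dot v b2))))"
    unfolding matrix_matrix_mult_entry[of "dagger (GU S1 ** HN)"]
    by (simp only: dagger_def vec_lambda_beta GU_HN_entry HN_entry a_def)
  moreover have "\<dots> = (\<Sum>v\<in>UNIV. (a * a) * (chirp_phase S1 S2 v * bit_sign (dot v (b1 + b2))))"
    by (intro sum.cong refl)
      (simp add: chirp_phase_def dot_add_right bit_sign_add a_def algebra_simps del: add_bit_eq_xor)
  ultimately show ?thesis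
    by (simp add: chirp_correlation_def sum_distrib_left)
qed

lemma sum_translate_bit_vec: "(\<Sum>w\<in>UNIV. f w) = (\<Sum>u\<in>UNIV. f (v + u :: bit^'n))"
proof -
  have "bij_betw (\<lambda>u. v + u) (UNIV :: (bit^'n) set) UNIV"
    by (rule bij_betwI[where g = "\<lambda>u. v + u"]) (auto simp: add.assoc[symmetric])
  from sum.reindex_bij_betw[OF this, of f] show ?thesis
    by simp
qed

lemma chirp_correlation_kernel_invariant:
  assumes "transpose S1 = S1" "transpose S2 = S2" and u: "(S1 + S2) *v u = 0"
  shows "chirp_correlation S1 S2 c = chirp_phase S1 S2 u * bit_sign (dot u c) * chirp_correlation S1 S2 c"
proof -
  have "chirp_correlation S1 S2 c = (\<Sum>v\<in>UNIV. chirp_phase S1 S2 (v + u) * bit_sign (dot (v + u) c))"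
    unfolding chirp_correlation_def by (subst sum_translate_bit_vec[of _ u]) (simp only: add.commute)
  also have "\<dots> = (\<Sum>v\<in>UNIV. chirp_phase S1 S2 u * bit_sign (dot u c) * (chirp_phase S1 S2 v * bit_sign (dot v c)))"
    by (simp add: chirp_phase_add[OF assms(1,2)] u dot_add_left bit_sign_add mult_ac del: add_bit_eq_xor)
  also have "\<dots> = chirp_phase S1 S2 u * bit_sign (dot u c) * chirp_correlation S1 S2 c"
    by (simp add: chirp_correlation_def sum_distrib_left)
  finally show ?thesis .
qed

(* On the kernel the phase is a character; a nonvanishing correlation exhibits it as a sign
   character, which avoids extending characters from a subspace. *)
lemma chirp_phase_on_kernel:
  assumes "transpose S1 = S1" "transpose S2 = S2" and u: "(S1 + S2) *v u = 0"
    and nz: "chirp_correlation S1 S2 c \<noteq> 0"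
  shows "chirp_phase S1 S2 u = bit_sign (dot u c)"
proof -
  have "chirp_phase S1 S2 u * bit_sign (dot u c) = 1"
    using chirp_correlation_kernel_invariant[OF assms(1-3), of c] nz by simp
  then have "chirp_phase S1 S2 u * bit_sign (dot u c) * bit_sign (dot u c) = bit_sign (dot u c)"
    by simp
  then show ?thesis
    by (simp add: mult.assoc bit_sign_mult_self)
qed

lemma chirp_correlation_mult_cnj:
  fixes S1 S2 :: "bit^'n^'n"
  assumes "transpose S1 = S1" "transpose S2 = S2"
  shows "chirp_correlation S1 S2 c * cnj (chirp_correlation S1 S2 c) = 2 ^ CARD('n) *
           (\<Sum>u\<in>{u. (S1 + S2) *v u = 0}. bit_sign (dot u c) * cnj (chirp_phase S1 S2 u))"
proof -
  let ?S = "S1 + S2" and ?\<chi> = "chirp_phase S1 S2"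
  have "chirp_correlation S1 S2 c * cnj (chirp_correlation S1 S2 c)
      = (\<Sum>v\<in>UNIV. \<Sum>u\<in>UNIV. (?\<chi> v * bit_sign (dot v c)) * cnj (?\<chi> (v + u) * bit_sign (dot (v + u) c)))"
    unfolding chirp_correlation_def sum_product cnj_sum
    by (rule sum.cong[OF refl], rule sum_translate_bit_vec)
  also have "\<dots> = (\<Sum>v\<in>UNIV. \<Sum>u\<in>UNIV. cnj (?\<chi> u) * bit_sign (dot u c) * bit_sign (dot v (?S *v u)))"
  proof (intro sum.cong refl)
    fix v u
    have "cnj (?\<chi> (v + u) * bit_sign (dot (v + u) c))
        = cnj (?\<chi> v) * cnj (?\<chi> u) * bit_sign (dot v (?S *v u)) * bit_sign (dot v c) * bit_sign (dot u c)"
      by (simp add: chirp_phase_add[OF assms] dot_add_left bit_sign_add mult.assoc del: add_bit_eq_xor)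
    then show "(?\<chi> v * bit_sign (dot v c)) * cnj (?\<chi> (v + u) * bit_sign (dot (v + u) c))
        = cnj (?\<chi> u) * bit_sign (dot u c) * bit_sign (dot v (?S *v u))"
      by (simp add: mult_ac bit_sign_mult_self)
  qed
  also have "\<dots> = (\<Sum>u\<in>UNIV. cnj (?\<chi> u) * bit_sign (dot u c) * (\<Sum>v\<in>UNIV. bit_sign (dot v (?S *v u))))"
    by (subst sum.swap) (simp add: sum_distrib_left)
  also have "\<dots> = (\<Sum>u\<in>{u. ?S *v u = 0}. 2 ^ CARD('n) * (bit_sign (dot u c) * cnj (?\<chi> u)))"
    by (simp add: sum_bit_sign_dot_UNIV sum.If_cases if_distrib[of "\<lambda>x. _ * x"] mult_ac cong: if_cong)
  finally show ?thesis
    by (simp add: sum_distrib_left)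
qed

lemma sum_chirp_correlation: "(\<Sum>c\<in>UNIV. chirp_correlation S1 S2 c) = 2 ^ CARD('n)"
  for S1 S2 :: "bit^'n^'n"
proof -
  have "(\<Sum>c\<in>UNIV. chirp_correlation S1 S2 c)
      = (\<Sum>v\<in>UNIV. chirp_phase S1 S2 v * (\<Sum>c\<in>UNIV. bit_sign (dot c v)))"
    unfolding chirp_correlation_def by (subst sum.swap) (simp add: sum_distrib_left dot_commute)
  then show ?thesis
    by (simp add: sum_bit_sign_dot_UNIV if_distrib[of "\<lambda>x. _ * x"] sum.delta cong: if_cong)
qed

lemma ex_chirp_correlation_nonzero: "\<exists>c. chirp_correlation S1 S2 c \<noteq> 0"
proof (rule ccontr)
  assume "\<nexists>c. chirp_correlation S1 S2 c \<noteq> 0"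
  then have "(\<Sum>c\<in>UNIV. chirp_correlation S1 S2 c) = 0"
    by simp
  then show False
    using sum_chirp_correlation[of S1 S2] by simp
qed

lemma norm_chirp_correlation_square:
  fixes S1 S2 :: "bit^'n^'n"
  assumes "transpose S1 = S1" "transpose S2 = S2" and nz: "chirp_correlation S1 S2 c0 \<noteq> 0"
  defines "K \<equiv> {u. (S1 + S2) *v u = 0}"
  shows "(norm (chirp_correlation S1 S2 c))\<^sup>2
           = (if c + c0 \<in> vec.span (rows (S1 + S2)) then 2 ^ CARD('n) * real (card K) else 0)"
proof -
  have "(\<Sum>u\<in>K. bit_sign (dot u c) * cnj (chirp_phase S1 S2 u)) = (\<Sum>u\<in>K. bit_sign (dot u (c + c0)))"
    by (intro sum.cong refl)
      (simp add: K_def chirp_phase_on_kernel[OF assms(1,2) _ nz] dot_add_right bit_sign_add del: add_bit_eq_xor)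
  also have "\<dots> = (if c + c0 \<in> perp K then of_nat (card K) else 0)"
    by (rule sum_bit_sign_dot_subgroup) (simp add: K_def matrix_vector_right_distrib)
  finally have "chirp_correlation S1 S2 c * cnj (chirp_correlation S1 S2 c)
      = 2 ^ CARD('n) * (if c + c0 \<in> perp K then of_nat (card K) else 0)"
    using chirp_correlation_mult_cnj[OF assms(1,2), of c] by (simp only: K_def)
  then have "complex_of_real ((norm (chirp_correlation S1 S2 c))\<^sup>2)
      = complex_of_real (if c + c0 \<in> perp K then 2 ^ CARD('n) * real (card K) else 0)"
    by (simp only: complex_norm_square) simp
  then show ?thesis
    unfolding of_real_eq_iff K_def perp_kernel_eq_row_space .
qed

lemma chirp_correlation_nonzero_iff:
  fixes S1 S2 :: "bit^'n^'n"
  assumes "transpose S1 = S1" "transpose S2 = S2" and "chirp_correlation S1 S2 c0 \<noteq> 0"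
  shows "chirp_correlation S1 S2 c \<noteq> 0 \<longleftrightarrow> c + c0 \<in> vec.span (rows (S1 + S2))"
proof -
  have "chirp_correlation S1 S2 c \<noteq> 0 \<longleftrightarrow> (norm (chirp_correlation S1 S2 c))\<^sup>2 \<noteq> 0"
    by simp
  also have "\<dots> \<longleftrightarrow> c + c0 \<in> vec.span (rows (S1 + S2))"
    using norm_chirp_correlation_square[OF assms, of c] card_kernel_nonzero[of "S1 + S2"] by simp
  finally show ?thesis .
qed

lemma power2_powr_minus_half: "(2 powr (- real r / 2))\<^sup>2 = 1 / 2 ^ r"
proof -
  have "(2 powr (- real r / 2))\<^sup>2 = 2 powr (- real r / 2 + - real r / 2)"
    by (simp only: power2_eq_square powr_add)
  also have "\<dots> = 1 / 2 ^ r"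
    by (simp add: powr_minus powr_realpow divide_simps)
  finally show ?thesis .
qed

lemma norm_chirp_correlation:
  fixes S1 S2 :: "bit^'n^'n"
  assumes "transpose S1 = S1" "transpose S2 = S2" and "chirp_correlation S1 S2 c0 \<noteq> 0"
    and "c + c0 \<in> vec.span (rows (S1 + S2))"
  shows "norm (chirp_correlation S1 S2 c) = 2 ^ CARD('n) * 2 powr (- real (rank (S1 + S2)) / 2)"
proof -
  let ?n = "CARD('n)" and ?r = "rank (S1 + S2)"
  have "real (card {u. (S1 + S2) *v u = 0} * 2 ^ ?r) = real (2 ^ ?n)"
    using card_kernel_mult_card_row_space[of "S1 + S2"] by (simp only: card_row_space)
  then have "real (card {u. (S1 + S2) *v u = 0}) * 2 ^ ?r = 2 ^ ?n"
    by (simp only: of_nat_mult of_nat_power of_nat_numeral)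
  then have card_kernel: "real (card {u. (S1 + S2) *v u = 0}) = 2 ^ ?n / 2 ^ ?r"
    by (simp add: eq_divide_eq)
  have "(2 ^ ?n * 2 powr (- real ?r / 2))\<^sup>2 = (2 ^ ?n)\<^sup>2 * (1 / 2 ^ ?r)"
    by (simp only: power_mult_distrib power2_powr_minus_half)
  also have "\<dots> = (norm (chirp_correlation S1 S2 c))\<^sup>2"
    using norm_chirp_correlation_square[OF assms(1-3), of c] assms(4) card_kernel
    by (simp add: power2_eq_square)
  finally show ?thesis
    by (simp add: power2_eq_iff_nonneg)
qed

lemma norm_chirp_gram_entry:
  fixes S1 S2 :: "bit^'n^'n"
  assumes "transpose S1 = S1" "transpose S2 = S2" and "chirp_correlation S1 S2 c0 \<noteq> 0"
    and "b1 + b2 + c0 \<in> vec.span (rows (S1 + S2))"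
  shows "norm ((dagger (GU S1 ** HN) ** (GU S2 ** HN))$b1$b2) = 2 powr (- real (rank (S1 + S2)) / 2)"
proof -
  have "norm (chirp_correlation S1 S2 (b1 + b2)) = 2 ^ CARD('n) * 2 powr (- real (rank (S1 + S2)) / 2)"
    by (rule norm_chirp_correlation[OF assms])
  moreover have "2 powr (- real CARD('n)) * 2 ^ CARD('n) = (1 :: real)"
    by (simp add: powr_minus powr_realpow)
  ultimately show ?thesis
    by (simp add: chirp_gram_entry norm_mult mult.assoc[symmetric])
qed

lemma mem_translate_bit_vec_iff: "x \<in> (\<lambda>h. a + h) ` H \<longleftrightarrow> x + a \<in> (H :: (bit^'n) set)"
  by (auto simp: image_iff add_eq_iff_bit_vec[symmetric])

theorem corollary4:
  fixes S1 S2 :: "bit^'n^'n"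
  assumes "transpose S1 = S1" and "transpose S2 = S2"
  defines "G \<equiv> dagger (GU S1 ** HN) ** (GU S2 ** HN)"
      and "r \<equiv> rank (S1 + S2)"
      and "H \<equiv> vec.span (rows (S1 + S2))"
  shows "\<forall>b2. card {b1. G$b1$b2 \<noteq> 0} = 2 ^ r
           \<and> (\<forall>b1. G$b1$b2 \<noteq> 0 \<longrightarrow> norm (G$b1$b2) = 2 powr (- real r / 2))
           \<and> (\<exists>a. {b1. G$b1$b2 \<noteq> 0} = (\<lambda>h. a + h) ` H)"
proof
  fix b2
  obtain c0 where c0: "chirp_correlation S1 S2 c0 \<noteq> 0"
    using ex_chirp_correlation_nonzero by blast
  have entry: "G$b1$b2 = complex_of_real (2 powr - real CARD('n)) * chirp_correlation S1 S2 (b1 + b2)" for b1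
    unfolding G_def by (rule chirp_gram_entry)
  have nonzero_iff: "G$b1$b2 \<noteq> 0 \<longleftrightarrow> b1 + b2 + c0 \<in> H" for b1
    using chirp_correlation_nonzero_iff[OF assms(1,2) c0, of "b1 + b2"] by (simp add: entry H_def)
  have support: "{b1. G$b1$b2 \<noteq> 0} = (\<lambda>h. (b2 + c0) + h) ` H"
    unfolding set_eq_iff mem_Collect_eq nonzero_iff mem_translate_bit_vec_iff by (simp add: add.assoc)
  have "card {b1. G$b1$b2 \<noteq> 0} = 2 ^ r"
    unfolding support by (simp add: card_image H_def r_def card_row_space)
  moreover have "norm (G$b1$b2) = 2 powr (- real r / 2)" if "G$b1$b2 \<noteq> 0" for b1
    using norm_chirp_gram_entry[OF assms(1,2) c0, of b1 b2] that[unfolded nonzero_iff]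
    unfolding G_def H_def r_def by blast
  ultimately show "card {b1. G$b1$b2 \<noteq> 0} = 2 ^ r
           \<and> (\<forall>b1. G$b1$b2 \<noteq> 0 \<longrightarrow> norm (G$b1$b2) = 2 powr (- real r / 2))
           \<and> (\<exists>a. {b1. G$b1$b2 \<noteq> 0} = (\<lambda>h. a + h) ` H)"
    using support by blast
qed

end
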